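(* Let $\lambda>0$. On $\mathbb{R}^2$ with light-cone coordinates $(u,v)$, consider the operator $P = 4\partial_u\partial_v + 4\lambda^{-4}uv$ (the massless wave operator with Grosse–Wulkenhaar potential, $\partial_\mu\partial^\mu + 4\lambda^{-4}x_\mu x^\mu$, written in light-cone coordinates). Define $$V(u_1,v_1;u_2,v_2)=\sum_{n=0}^\infty (-1)^n \frac{(u_1^2-u_2^2)^n}{2^n\lambda^{2n}n!}\,\frac{(v_1^2-v_2^2)^n}{2^n\lambda^{2n}n!}$$ and $$\Delta_{\mathrm{ret}}(u_1,v_1;u_2,v_2)=\tfrac12 H(u_1-u_2)H(v_1-v_2)\,V(u_1,v_1;u_2,v_2),$$ where $H$ is the Heaviside function. Then the series defining $V$ converges for all arguments to an entire (real-analytic) function, and $\Delta_{\mathrm{ret}}$ is the retarded propagator of $P$: it is supported in $\{u_1\ge u_2,\ v_1\ge v_2\}$ and, as a distribution in $(u_1,v_1)$ for fixed $(u_2,v_2)$, $$\big(4\partial_{u_1}\partial_{v_1}+4\lambda^{-4}u_1v_1\big)\Delta_{\mathrm{ret}}(u_1,v_1;u_2,v_2)=2\,\delta(u_1-u_2)\,\delta(v_1-v_2),$$ i.e. equals $\delta^{(2)}(x_1-x_2)$ in the original Minkowski coordinates. Equivalently, $\Delta_{\mathrm{ret}}=\tfrac12 H(u_1-u_2)H(v_1-v_2)\,J_0\big(\lambda^{-2}\sqrt{(u_1^2-u_2^2)(v_1^2-v_2^2)}\big)$ with $J_0$ the Bessel function of order $0$. *)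

theory Defs
  imports "HOL-Analysis.Analysis"
begin

definition heaviside :: "real \<Rightarrow> real" where
  "heaviside x = (if x \<ge> 0 then 1 else 0)"

text \<open>The n-th term of the series V, over any real normed field
  (complex arguments are used to express that V is entire).\<close>
definition Vterm :: "real \<Rightarrow> 'a::real_normed_field \<Rightarrow> 'a \<Rightarrow> 'a \<Rightarrow> 'a \<Rightarrow> nat \<Rightarrow> 'a" where
  "Vterm lam u1 v1 u2 v2 n =
     (-1) ^ n * ((u1\<^sup>2 - u2\<^sup>2) ^ n / of_real (2 ^ n * lam ^ (2 * n) * fact n))
              * ((v1\<^sup>2 - v2\<^sup>2) ^ n / of_real (2 ^ n * lam ^ (2 * n) * fact n))"

definition V :: "real \<Rightarrow> real \<Rightarrow> real \<Rightarrow> real \<Rightarrow> real \<Rightarrow> real" where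
  "V lam u1 v1 u2 v2 = (\<Sum>n. Vterm lam u1 v1 u2 v2 n)"

definition Delta_ret :: "real \<Rightarrow> real \<Rightarrow> real \<Rightarrow> real \<Rightarrow> real \<Rightarrow> real" where
  "Delta_ret lam u1 v1 u2 v2 =
     1 / 2 * heaviside (u1 - u2) * heaviside (v1 - v2) * V lam u1 v1 u2 v2"

definition bessel_J0 :: "complex \<Rightarrow> complex" where
  "bessel_J0 z = (\<Sum>n. (-1) ^ n * (z / 2) ^ (2 * n) / of_real ((fact n)\<^sup>2))"

fun Ck :: "nat \<Rightarrow> (real \<times> real \<Rightarrow> real) \<Rightarrow> bool" where
  "Ck 0 f = continuous_on UNIV f"
| "Ck (Suc k) f = (\<exists>D1 D2. (\<forall>x. (f has_derivative (\<lambda>h. D1 x * fst h + D2 x * snd h)) (at x))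
                            \<and> Ck k D1 \<and> Ck k D2)"

definition smooth2 :: "(real \<times> real \<Rightarrow> real) \<Rightarrow> bool" where
  "smooth2 f = (\<forall>k. Ck k f)"

definition test_function :: "(real \<times> real \<Rightarrow> real) \<Rightarrow> bool" where
  "test_function f = (smooth2 f \<and> compact (closure {x. f x \<noteq> 0}))"

definition d_uv :: "(real \<times> real \<Rightarrow> real) \<Rightarrow> real \<times> real \<Rightarrow> real" where
  "d_uv f x = deriv (\<lambda>u. deriv (\<lambda>v. f (u, v)) (snd x)) (fst x)"

text \<open>The operator P = 4 \<partial>_u \<partial>_v + 4 \<lambda>^{-4} u v (formally self-adjoint).\<close>
definition P_op :: "real \<Rightarrow> (real \<times> real \<Rightarrow> real) \<Rightarrow> real \<times> real \<Rightarrow> real" where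
  "P_op lam f x = 4 * d_uv f x + 4 / lam ^ 4 * fst x * snd x * f x"

end

theory Submission
  imports Defs
begin

text \<open>With \<open>a u = (u\<^sup>2 - u\<^sub>2\<^sup>2) / (2\<lambda>\<^sup>2)\<close> and \<open>b v = (v\<^sup>2 - v\<^sub>2\<^sup>2) / (2\<lambda>\<^sup>2)\<close>,
  the series is \<open>V = W (a u * b v)\<close> for the entire function
  \<open>W t = \<Sum>n. (-1)\<^sup>n t\<^sup>n / (n!)\<^sup>2 = J\<^sub>0 (2 \<surd>t)\<close>, which solves \<open>t W'' + W' + W = 0\<close>.
  Hence \<open>\<partial>\<^sub>u \<partial>\<^sub>v V = -\<lambda>\<^sup>-\<^sup>4 u v V\<close>, i.e. \<open>P V = 0\<close>, while \<open>V = 1\<close> on the two characteristic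
  lines \<open>u = u\<^sub>2\<close> and \<open>v = v\<^sub>2\<close>. Pairing \<open>\<Delta>\<^sub>r\<^sub>e\<^sub>t\<close> with \<open>P \<phi>\<close> leaves an integral over a box
  \<open>[u\<^sub>2, u\<^sub>3] \<times> [v\<^sub>2, v\<^sub>3]\<close> beyond whose far sides \<open>\<phi>\<close> vanishes. There the integrand is
  \<open>\<partial>\<^sub>u (V \<partial>\<^sub>v \<phi>) - \<partial>\<^sub>v (\<partial>\<^sub>u V \<phi>)\<close>; by Fubini and the fundamental theorem of calculus the
  second term integrates to zero (\<open>\<partial>\<^sub>u V\<close> vanishes on \<open>v = v\<^sub>2\<close>) and the first to
  \<open>-\<integral> \<partial>\<^sub>v \<phi> (u\<^sub>2, v) dv = \<phi> (u\<^sub>2, v\<^sub>2)\<close>.\<close>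

definition W_coeff :: "nat \<Rightarrow> real" where
  "W_coeff n = (-1) ^ n / (fact n)\<^sup>2"

definition W :: "nat \<Rightarrow> real \<Rightarrow> real" where
  "W k t = (\<Sum>n. (diffs ^^ k) W_coeff n * t ^ n)"

lemma W_coeff_diffs: "(diffs ^^ k) W_coeff n = (-1) ^ (n + k) / (fact n * fact (n + k))"
proof (induction k arbitrary: n)
  case 0
  then show ?case by (simp add: W_coeff_def power2_eq_square)
next
  case (Suc k)
  have "(diffs ^^ Suc k) W_coeff n = real (Suc n) * (diffs ^^ k) W_coeff (Suc n)"
    by (simp add: diffs_def)
  also have "\<dots> = (-1) ^ (n + Suc k) / (fact n * fact (n + Suc k))"
    by (simp add: Suc.IH divide_simps del: of_nat_Suc)
  finally show ?case .
qed

lemma summable_exp_dominated: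
  fixes c :: "nat \<Rightarrow> real"
  assumes "\<And>n. \<bar>c n\<bar> \<le> 1 / fact n"
  shows "summable (\<lambda>n. c n * t ^ n)"
proof (rule summable_comparison_test)
  show "\<exists>N. \<forall>n\<ge>N. norm (c n * t ^ n) \<le> inverse (fact n) * \<bar>t\<bar> ^ n"
    using assms by (auto simp: abs_mult power_abs divide_inverse intro!: mult_right_mono)
  show "summable (\<lambda>n. inverse (fact n) * \<bar>t\<bar> ^ n)"
    by (rule summable_exp)
qed

lemma abs_W_coeff_diffs_le: "\<bar>(diffs ^^ k) W_coeff n\<bar> \<le> 1 / fact n"
proof -
  have "fact n \<le> (fact n * fact (n + k) :: real)"
    using mult_left_mono[OF fact_ge_1[of "n + k"], of "fact n"] by simp
  then show ?thesis
    by (simp add: W_coeff_diffs abs_mult frac_le)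
qed

lemma summable_W: "summable (\<lambda>n. (diffs ^^ k) W_coeff n * t ^ n)"
  by (rule summable_exp_dominated[OF abs_W_coeff_diffs_le])

lemma W_has_derivative: "(W k has_field_derivative W (Suc k) t) (at t)"
  using termdiffs_strong_converges_everywhere[OF summable_W] by (simp add: W_def[abs_def])

lemma W_0_at_0: "W 0 0 = 1"
  unfolding W_def funpow_0 powser_zero by (simp add: W_coeff_def)

lemma W_ode: "W 1 t + t * W 2 t = - W 0 t"
proof -
  let ?c = "\<lambda>k n. (diffs ^^ k) W_coeff n * t ^ n"
  have shift: "?c 1 (Suc n) + t * ?c 2 n = - ?c 0 (Suc n)" for n
  proof -
    have "fact (Suc (Suc n)) = (real n + 2) * fact (Suc n)" by simp
    moreover have "fact (Suc n) = (real n + 1) * fact n" by simp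
    ultimately have "(diffs ^^ 1) W_coeff (Suc n) + (diffs ^^ 2) W_coeff n = - W_coeff (Suc n)"
      unfolding W_coeff_diffs W_coeff_def
      by (simp add: power2_eq_square divide_simps del: fact_Suc) (simp add: algebra_simps)
    then show ?thesis by (simp add: algebra_simps flip: distrib_left)
  qed
  have "W 1 t + t * W 2 t = ?c 1 0 + ((\<Sum>n. ?c 1 (Suc n)) + (\<Sum>n. t * ?c 2 n))"
    using suminf_split_head[OF summable_W[of 1 t]] suminf_mult[OF summable_W[of 2 t], of t]
    by (simp add: W_def)
  also have "\<dots> = ?c 1 0 + (\<Sum>n. ?c 1 (Suc n) + t * ?c 2 n)"
  proof -
    have "summable (\<lambda>n. ?c 1 (Suc n))"
      using summable_W[of 1 t] by (subst summable_Suc_iff)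
    moreover have "summable (\<lambda>n. t * ?c 2 n)"
      by (rule summable_mult[OF summable_W])
    ultimately show ?thesis by (simp only: suminf_add)
  qed
  also have "\<dots> = ?c 1 0 + (\<Sum>n. - ?c 0 (Suc n))"
    by (simp only: shift)
  also have "\<dots> = - W 0 t"
    using suminf_split_head[OF summable_W[of 0 t]]
      suminf_minus[OF summable_Suc_iff[THEN iffD2, OF summable_W[of 0 t]]]
    by (simp add: W_def diffs_def W_coeff_def)
  finally show ?thesis .
qed

lemma Vterm_eq_W_coeff:
  fixes u1 v1 u2 v2 :: "'a::real_normed_field"
  assumes "lam \<noteq> 0"
  shows "Vterm lam u1 v1 u2 v2 n
    = of_real (W_coeff n) * ((u1\<^sup>2 - u2\<^sup>2) * (v1\<^sup>2 - v2\<^sup>2) / of_real (4 * lam ^ 4)) ^ n"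
proof -
  define d :: 'a where "d = of_real (2 * lam\<^sup>2)"
  have "of_real (2 ^ n * lam ^ (2 * n) * fact n) = d ^ n * of_real (fact n)"
    by (simp add: d_def power_mult power_mult_distrib)
  moreover have "(of_real (4 * lam ^ 4) :: 'a) = d * d"
    by (simp add: d_def flip: of_real_mult)
  moreover have "(of_real (W_coeff n) :: 'a) = (-1) ^ n / (of_real (fact n))\<^sup>2"
    by (simp add: W_coeff_def)
  ultimately show ?thesis
    unfolding Vterm_def by (simp add: power_divide power_mult_distrib power2_eq_square mult_ac)
qed

lemma summable_norm_Vterm:
  fixes u1 v1 u2 v2 :: "'a::real_normed_field"
  assumes "lam \<noteq> 0"
  shows "summable (\<lambda>n. norm (Vterm lam u1 v1 u2 v2 n))"
proof -
  have "\<bar>\<bar>W_coeff n\<bar>\<bar> \<le> 1 / fact n" for n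
    using abs_W_coeff_diffs_le[of 0 n] by simp
  from summable_exp_dominated[OF this] show ?thesis
    by (simp add: Vterm_eq_W_coeff[OF assms] norm_mult norm_power)
qed

lemma V_eq_W:
  assumes "lam \<noteq> 0"
  shows "V lam u1 v1 u2 v2 = W 0 ((u1\<^sup>2 - u2\<^sup>2) * (v1\<^sup>2 - v2\<^sup>2) / (4 * lam ^ 4))"
  by (simp add: V_def W_def Vterm_eq_W_coeff[OF assms])

lemma bessel_J0_csqrt_eq_W:
  assumes "c \<noteq> 0"
  shows "bessel_J0 (csqrt (of_real x) / of_real c) = of_real (W 0 (x / (4 * c\<^sup>2)))"
proof -
  have "(csqrt (of_real x) / of_real c / 2) ^ (2 * n) = of_real ((x / (4 * c\<^sup>2)) ^ n)" for n
    by (simp add: power_mult power_divide power2_csqrt)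
  then have "bessel_J0 (csqrt (of_real x) / of_real c) = (\<Sum>n. of_real (W_coeff n * (x / (4 * c\<^sup>2)) ^ n))"
    by (simp add: bessel_J0_def W_coeff_def)
  also have "\<dots> = of_real (W 0 (x / (4 * c\<^sup>2)))"
    unfolding W_def funpow_0 by (rule suminf_of_real[OF summable_W[of 0, unfolded funpow_0], symmetric])
  finally show ?thesis .
qed

lemma has_real_derivative_W_comp [derivative_intros]:
  "(f has_real_derivative f') (at x) \<Longrightarrow> ((\<lambda>x. W k (f x)) has_real_derivative W (Suc k) (f x) * f') (at x)"
  by (rule DERIV_chain2[OF W_has_derivative])

lemma continuous_on_W_comp [continuous_intros]:
  "continuous_on S f \<Longrightarrow> continuous_on S (\<lambda>x. W k (f x))"
  by (rule continuous_on_compose2[of UNIV "W k"])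
     (auto intro: continuous_at_imp_continuous_on DERIV_isCont[OF W_has_derivative])

lemma has_real_derivative_mult_W1:
  assumes "(b has_real_derivative b') (at v)"
  shows "((\<lambda>v. b v * W 1 (s * b v)) has_real_derivative - W 0 (s * b v) * b') (at v)"
proof -
  have "((\<lambda>v. b v * W 1 (s * b v)) has_real_derivative
          b' * (W 1 (s * b v) + s * b v * W 2 (s * b v))) (at v)"
    by (auto intro!: derivative_eq_intros assms simp: algebra_simps numeral_2_eq_2)
  then show ?thesis
    using W_ode[of "s * b v"] by (simp add: mult.commute)
qed

lemma has_real_derivative_partial_fst:
  assumes "(f has_derivative (\<lambda>h. A * fst h + B * snd h)) (at (u, v))"
  shows "((\<lambda>u. f (u, v)) has_real_derivative A) (at u)"
proof -
  have "((\<lambda>u. (u, v)) has_derivative (\<lambda>h. (h, 0))) (at u)"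
    by (auto intro!: derivative_eq_intros)
  from has_derivative_compose[OF this assms] show ?thesis
    by (simp add: has_field_derivative_def)
qed

lemma has_real_derivative_partial_snd:
  assumes "(f has_derivative (\<lambda>h. A * fst h + B * snd h)) (at (u, v))"
  shows "((\<lambda>v. f (u, v)) has_real_derivative B) (at v)"
proof -
  have "((\<lambda>v. (u, v)) has_derivative (\<lambda>h. (0, h))) (at v)"
    by (auto intro!: derivative_eq_intros)
  from has_derivative_compose[OF this assms] show ?thesis
    by (simp add: has_field_derivative_def)
qed

lemma partial_derivatives_zero_on_open:
  fixes f :: "real \<times> real \<Rightarrow> real"
  assumes "open S" "x \<in> S" "\<And>y. y \<in> S \<Longrightarrow> f y = 0"
    and "(f has_derivative (\<lambda>h. A * fst h + B * snd h)) (at x)"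
  shows "A = 0" "B = 0"
proof -
  have "(f has_derivative (\<lambda>h. 0)) (at x)"
    by (rule has_derivative_transform_within_open[OF has_derivative_const assms(1,2)])
       (simp add: assms(3))
  from has_derivative_unique[OF assms(4) this]
  have "(\<lambda>h. A * fst h + B * snd h) = (\<lambda>h. 0)" .
  from fun_cong[OF this, of "(1, 0)"] fun_cong[OF this, of "(0, 1)"] show "A = 0" "B = 0"
    by simp_all
qed

lemma integral_has_real_derivative_eq:
  fixes f :: "real \<Rightarrow> real"
  assumes "a \<le> b" "\<And>x. (f has_real_derivative f' x) (at x)"
  shows "integral {a..b} f' = f b - f a"
proof (rule integral_unique, rule fundamental_theorem_of_calculus[OF assms(1)])
  fix x
  show "(f has_vector_derivative f' x) (at x within {a..b})"
    using assms(2)[of x]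
    by (simp add: has_real_derivative_iff_has_vector_derivative[symmetric] has_field_derivative_at_within)
qed

lemma box_has_integral_partial_fst:
  fixes F h :: "real \<times> real \<Rightarrow> real"
  assumes "a \<le> b" "continuous_on (cbox (a, c) (b, d)) h"
    and "\<And>u v. ((\<lambda>u. F (u, v)) has_real_derivative h (u, v)) (at u)"
  shows "(h has_integral integral {c..d} (\<lambda>v. F (b, v) - F (a, v))) (cbox (a, c) (b, d))"
proof -
  have "integral (cbox (a, c) (b, d)) h = integral {a..b} (\<lambda>u. integral {c..d} (\<lambda>v. h (u, v)))"
    using integral_prod_continuous[OF assms(2)] by simp
  also have "\<dots> = integral {c..d} (\<lambda>v. integral {a..b} (\<lambda>u. h (u, v)))"
    using integral_swap_continuous[where f="\<lambda>u v. h (u, v)"] assms(2) by simp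
  also have "\<dots> = integral {c..d} (\<lambda>v. F (b, v) - F (a, v))"
    using integral_has_real_derivative_eq[OF assms(1,3)] by simp
  finally show ?thesis
    using integrable_continuous[OF assms(2)] by (simp add: has_integral_iff)
qed

lemma box_has_integral_partial_snd:
  fixes F h :: "real \<times> real \<Rightarrow> real"
  assumes "c \<le> d" "continuous_on (cbox (a, c) (b, d)) h"
    and "\<And>u v. ((\<lambda>v. F (u, v)) has_real_derivative h (u, v)) (at v)"
  shows "(h has_integral integral {a..b} (\<lambda>u. F (u, d) - F (u, c))) (cbox (a, c) (b, d))"
  using integral_prod_continuous[OF assms(2)] integral_has_real_derivative_eq[OF assms(1,3)]
    integrable_continuous[OF assms(2)]
  by (simp add: has_integral_iff)

lemma box_has_integral_V_mult:
  fixes \<phi> D1 D2 E1 E2 :: "real \<times> real \<Rightarrow> real"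
  assumes lam: "lam \<noteq> 0" and u3: "u2 \<le> u3" and v3: "v2 \<le> v3"
    and d\<phi>: "\<And>x. (\<phi> has_derivative (\<lambda>h. D1 x * fst h + D2 x * snd h)) (at x)"
    and dD2: "\<And>x. (D2 has_derivative (\<lambda>h. E1 x * fst h + E2 x * snd h)) (at x)"
    and cE1: "continuous_on UNIV E1"
    and \<phi>_top: "\<And>u. \<phi> (u, v3) = 0" and D2_right: "\<And>v. D2 (u3, v) = 0"
  shows "((\<lambda>x. V lam (fst x) (snd x) u2 v2 * (E1 x + fst x * snd x / lam ^ 4 * \<phi> x))
           has_integral \<phi> (u2, v2)) (cbox (u2, v2) (u3, v3))"
proof -
  define a where "a u = (u\<^sup>2 - u2\<^sup>2) / (2 * lam\<^sup>2)" for u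
  define b where "b v = (v\<^sup>2 - v2\<^sup>2) / (2 * lam\<^sup>2)" for v
  have da: "(a has_real_derivative u / lam\<^sup>2) (at u)" for u
    unfolding a_def[abs_def] using lam by (auto intro!: derivative_eq_intros simp: field_simps)
  have db: "(b has_real_derivative v / lam\<^sup>2) (at v)" for v
    unfolding b_def[abs_def] using lam by (auto intro!: derivative_eq_intros simp: field_simps)
  define K where "K x = W 0 (a (fst x) * b (snd x))" for x
  define Ku where "Ku x = W 1 (a (fst x) * b (snd x)) * (fst x / lam\<^sup>2) * b (snd x)" for x
  define h1 where "h1 x = Ku x * D2 x + K x * E1 x" for x
  define h2 where "h2 x = Ku x * D2 x - fst x * snd x / lam ^ 4 * K x * \<phi> x" for x
  have cont_\<phi>: "continuous_on UNIV \<phi>" and cont_D2: "continuous_on UNIV D2"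
    using has_derivative_continuous[OF d\<phi>] has_derivative_continuous[OF dD2]
    by (auto intro: continuous_at_imp_continuous_on)
  have cont_K: "continuous_on UNIV K" and cont_Ku: "continuous_on UNIV Ku"
    unfolding K_def[abs_def] Ku_def[abs_def] a_def b_def by (intro continuous_intros; use lam in simp)+
  have V_eq: "V lam u v u2 v2 = K (u, v)" for u v
    using lam by (simp add: V_eq_W K_def a_def b_def power4_eq_xxxx power2_eq_square field_simps)
  have "(h1 has_integral integral {v2..v3} (\<lambda>v. K (u3, v) * D2 (u3, v) - K (u2, v) * D2 (u2, v)))
          (cbox (u2, v2) (u3, v3))"
  proof (rule box_has_integral_partial_fst[OF u3])
    show "continuous_on (cbox (u2, v2) (u3, v3)) h1"
      unfolding h1_def[abs_def] using cont_K cont_Ku cont_D2 cE1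
      by (intro continuous_intros) (auto intro: continuous_on_subset)
    show "((\<lambda>u. K (u, v) * D2 (u, v)) has_real_derivative h1 (u, v)) (at u)" for u v
      unfolding K_def h1_def Ku_def
      by (auto intro!: derivative_eq_intros da has_real_derivative_partial_fst[OF dD2])
  qed
  moreover have "integral {v2..v3} (\<lambda>v. K (u3, v) * D2 (u3, v) - K (u2, v) * D2 (u2, v))
      = integral {v2..v3} (\<lambda>v. - D2 (u2, v))"
    by (simp add: D2_right K_def a_def W_0_at_0)
  moreover have "\<dots> = \<phi> (u2, v2)"
    using integral_has_real_derivative_eq[OF v3 DERIV_minus[OF has_real_derivative_partial_snd[OF d\<phi>]]]
    by (simp add: \<phi>_top)
  ultimately have int_h1: "(h1 has_integral \<phi> (u2, v2)) (cbox (u2, v2) (u3, v3))"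
    by simp
  have "(h2 has_integral integral {u2..u3} (\<lambda>u. Ku (u, v3) * \<phi> (u, v3) - Ku (u, v2) * \<phi> (u, v2)))
          (cbox (u2, v2) (u3, v3))"
  proof (rule box_has_integral_partial_snd[OF v3])
    show "continuous_on (cbox (u2, v2) (u3, v3)) h2"
      unfolding h2_def[abs_def] using cont_K cont_Ku cont_D2 cont_\<phi> lam
      by (intro continuous_intros) (auto intro: continuous_on_subset)
    show "((\<lambda>v. Ku (u, v) * \<phi> (u, v)) has_real_derivative h2 (u, v)) (at v)" for u v
    proof -
      have "((\<lambda>v. u / lam\<^sup>2 * (b v * W 1 (a u * b v)) * \<phi> (u, v)) has_real_derivative
              u / lam\<^sup>2 * (- W 0 (a u * b v) * (v / lam\<^sup>2)) * \<phi> (u, v)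
              + D2 (u, v) * (u / lam\<^sup>2 * (b v * W 1 (a u * b v)))) (at v)"
        by (rule DERIV_mult[OF DERIV_cmult[OF has_real_derivative_mult_W1[OF db]]
              has_real_derivative_partial_snd[OF d\<phi>]])
      then show ?thesis
        using lam by (simp add: Ku_def h2_def K_def power4_eq_xxxx power2_eq_square field_simps)
    qed
  qed
  then have int_h2: "(h2 has_integral 0) (cbox (u2, v2) (u3, v3))"
    by (simp add: \<phi>_top Ku_def b_def)
  have "V lam (fst x) (snd x) u2 v2 * (E1 x + fst x * snd x / lam ^ 4 * \<phi> x) = h1 x - h2 x" for x
    by (cases x) (simp add: V_eq h1_def h2_def algebra_simps)
  then show ?thesis
    using has_integral_diff[OF int_h1 int_h2] by simp
qed

lemma vanishes_outside_square_if_compact_support: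
  fixes f :: "real \<times> real \<Rightarrow> real"
  assumes "compact (closure {x. f x \<noteq> 0})"
  obtains R where "\<And>x. R < \<bar>fst x\<bar> \<or> R < \<bar>snd x\<bar> \<Longrightarrow> f x = 0"
proof -
  obtain R where R: "\<And>x. x \<in> closure {x. f x \<noteq> 0} \<Longrightarrow> norm x \<le> R"
    using compact_imp_bounded[OF assms] unfolding bounded_iff by blast
  have "f x = 0" if "R < \<bar>fst x\<bar> \<or> R < \<bar>snd x\<bar>" for x
  proof (rule ccontr)
    assume "f x \<noteq> 0"
    then have "norm x \<le> R"
      by (intro R subsetD[OF closure_subset]) simp
    moreover have "\<bar>fst x\<bar> \<le> norm x" "\<bar>snd x\<bar> \<le> norm x"
      using norm_fst_le[of "fst x" "snd x"] norm_snd_le[of "snd x" "fst x"] by simp_all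
    ultimately show False
      using that by linarith
  qed
  then show ?thesis using that by blast
qed

lemma Delta_ret_P_op_has_integral:
  fixes \<phi> :: "real \<times> real \<Rightarrow> real"
  assumes lam: "lam > 0" and tf: "test_function \<phi>"
  shows "((\<lambda>x. Delta_ret lam (fst x) (snd x) u2 v2 * P_op lam \<phi> x) has_integral 2 * \<phi> (u2, v2)) UNIV"
proof -
  from tf have "Ck (Suc (Suc 0)) \<phi>"
    by (simp add: test_function_def smooth2_def)
  then obtain D1 D2 where d\<phi>: "\<And>x. (\<phi> has_derivative (\<lambda>h. D1 x * fst h + D2 x * snd h)) (at x)"
    and "Ck (Suc 0) D2"
    unfolding Ck.simps(2)[of "Suc 0"] by blast
  then obtain E1 E2 where dD2: "\<And>x. (D2 has_derivative (\<lambda>h. E1 x * fst h + E2 x * snd h)) (at x)"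
    and cE1: "continuous_on UNIV E1"
    by auto
  obtain R where \<phi>_0: "\<And>x. R < \<bar>fst x\<bar> \<or> R < \<bar>snd x\<bar> \<Longrightarrow> \<phi> x = 0"
    using tf vanishes_outside_square_if_compact_support unfolding test_function_def by blast
  define S where "S = {x :: real \<times> real. R < \<bar>fst x\<bar>} \<union> {x. R < \<bar>snd x\<bar>}"
  have "open S"
    unfolding S_def by (intro open_Un open_Collect_less continuous_intros)
  have D2_0: "D2 x = 0" if "x \<in> S" for x
    using partial_derivatives_zero_on_open(2)[OF \<open>open S\<close> that _ d\<phi>] \<phi>_0 by (auto simp: S_def)
  have E1_0: "E1 x = 0" if "x \<in> S" for x
    using partial_derivatives_zero_on_open(1)[OF \<open>open S\<close> that _ dD2] D2_0 by blast
  have d_uv: "d_uv \<phi> x = E1 x" for x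
  proof -
    have "(\<lambda>u. deriv (\<lambda>v. \<phi> (u, v)) (snd x)) = (\<lambda>u. D2 (u, snd x))"
      using DERIV_imp_deriv[OF has_real_derivative_partial_snd[OF d\<phi>]] by simp
    then show ?thesis
      using DERIV_imp_deriv[OF has_real_derivative_partial_fst[OF dD2]] by (simp add: d_uv_def)
  qed
  define u3 where "u3 = \<bar>u2\<bar> + \<bar>R\<bar> + 1"
  define v3 where "v3 = \<bar>v2\<bar> + \<bar>R\<bar> + 1"
  define B where "B = cbox (u2, v2) (u3, v3)"
  define g where "g x = V lam (fst x) (snd x) u2 v2 * (E1 x + fst x * snd x / lam ^ 4 * \<phi> x)" for x
  have "(g has_integral \<phi> (u2, v2)) B"
    unfolding g_def B_def
    by (rule box_has_integral_V_mult[OF _ _ _ d\<phi> dD2 cE1])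
       (use lam in \<open>auto simp: u3_def v3_def S_def intro!: \<phi>_0 D2_0\<close>)
  then have "((\<lambda>x. if x \<in> B then 2 * g x else 0) has_integral 2 * \<phi> (u2, v2)) UNIV"
    by (simp add: has_integral_restrict_UNIV has_integral_mult_right)
  moreover have "Delta_ret lam (fst x) (snd x) u2 v2 * P_op lam \<phi> x = (if x \<in> B then 2 * g x else 0)" for x
  proof (cases "u2 \<le> fst x \<and> v2 \<le> snd x")
    case True
    then have "x \<in> B \<or> x \<in> S"
      by (cases x) (auto simp: B_def S_def u3_def v3_def)
    with True show ?thesis
      by (auto simp: Delta_ret_def heaviside_def P_op_def d_uv g_def field_simps E1_0 \<phi>_0[of x] S_def)
  next
    case False
    then show ?thesis
      by (cases x) (auto simp: Delta_ret_def heaviside_def B_def)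
  qed
  ultimately show ?thesis
    by simp
qed

theorem mainTheorem1:
  fixes lam :: real
  assumes "lam > 0"
  shows "(\<forall>u1 v1 u2 v2 :: complex. summable (\<lambda>n. norm (Vterm lam u1 v1 u2 v2 n)))
       \<and> (\<forall>u1 v1 u2 v2 :: real. summable (\<lambda>n. Vterm lam u1 v1 u2 v2 n))
       \<and> (\<forall>u1 v1 u2 v2. \<not> (u1 \<ge> u2 \<and> v1 \<ge> v2) \<longrightarrow> Delta_ret lam u1 v1 u2 v2 = 0)
       \<and> (\<forall>u2 v2 \<phi>. test_function \<phi> \<longrightarrow>
            (\<lambda>x. Delta_ret lam (fst x) (snd x) u2 v2 * P_op lam \<phi> x) integrable_on UNIV
          \<and> integral UNIV (\<lambda>x. Delta_ret lam (fst x) (snd x) u2 v2 * P_op lam \<phi> x)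
              = 2 * \<phi> (u2, v2))
       \<and> (\<forall>u1 v1 u2 v2. complex_of_real (Delta_ret lam u1 v1 u2 v2)
            = 1 / 2 * complex_of_real (heaviside (u1 - u2) * heaviside (v1 - v2))
              * bessel_J0 (csqrt (complex_of_real ((u1\<^sup>2 - u2\<^sup>2) * (v1\<^sup>2 - v2\<^sup>2))) / complex_of_real (lam\<^sup>2)))"
proof (intro conjI allI impI)
  have lam: "lam \<noteq> 0"
    using assms by simp
  show "summable (\<lambda>n. norm (Vterm lam u1 v1 u2 v2 n))" for u1 v1 u2 v2 :: complex
    by (rule summable_norm_Vterm[OF lam])
  show "summable (\<lambda>n. Vterm lam u1 v1 u2 v2 n)" for u1 v1 u2 v2 :: real
    by (rule summable_norm_cancel[OF summable_norm_Vterm[OF lam]])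
  show "Delta_ret lam u1 v1 u2 v2 = 0" if "\<not> (u1 \<ge> u2 \<and> v1 \<ge> v2)" for u1 v1 u2 v2
    using that by (auto simp: Delta_ret_def heaviside_def)
  show "(\<lambda>x. Delta_ret lam (fst x) (snd x) u2 v2 * P_op lam \<phi> x) integrable_on UNIV"
    and "integral UNIV (\<lambda>x. Delta_ret lam (fst x) (snd x) u2 v2 * P_op lam \<phi> x) = 2 * \<phi> (u2, v2)"
    if "test_function \<phi>" for u2 v2 \<phi>
    using Delta_ret_P_op_has_integral[OF assms that] by (auto intro: has_integral_integrable integral_unique)
  show "complex_of_real (Delta_ret lam u1 v1 u2 v2)
      = 1 / 2 * complex_of_real (heaviside (u1 - u2) * heaviside (v1 - v2))
        * bessel_J0 (csqrt (complex_of_real ((u1\<^sup>2 - u2\<^sup>2) * (v1\<^sup>2 - v2\<^sup>2))) / complex_of_real (lam\<^sup>2))"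
    for u1 v1 u2 v2
  proof -
    have "(lam\<^sup>2)\<^sup>2 = lam ^ 4"
      by simp
    then show ?thesis
      using bessel_J0_csqrt_eq_W[of "lam\<^sup>2" "(u1\<^sup>2 - u2\<^sup>2) * (v1\<^sup>2 - v2\<^sup>2)"] lam
      by (simp only: Delta_ret_def V_eq_W[OF lam] of_real_mult of_real_divide) simp
  qed
qed

end
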